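(* Let $f_{1,\infty}=\{f_n\}$ be a periodic sequence of continuous maps $f_n:[0,1]\to[0,1]$ (i.e. there is $k\in\mathbb{N}$ with $f_{j+kl}=f_j$ for all $l\in\mathbb{N}$, $1\le j\le k$). Then $([0,1],f_{1,\infty})$ is strongly multi-sensitive if and only if $(\mathcal{M}([0,1]),\widetilde f_{1,\infty})$ is strongly multi-sensitive; and $([0,1],f_{1,\infty})$ is $\mathcal{N}$-sensitive if and only if $(\mathcal{M}([0,1]),\widetilde f_{1,\infty})$ is $\mathcal{N}$-sensitive.
   Context: $\mathcal{M}([0,1])$ is the space of Borel probability measures on $[0,1]$ with the Prohorov metric $\mathcal{D}(\nu_1,\nu_2)=\inf\{\epsilon>0:\nu_1(B)\le\nu_2(N(B,\epsilon))+\epsilon \text{ for all Borel } B\}$, $N(B,\epsilon)$ the $\epsilon$-neighbourhood of $B$. The induced system is $\widetilde{f}_{1,\infty}=\{\widetilde f_n\}$ with $\widetilde f_n(\nu)=\nu\circ f_n^{-1}$ (push-forward). For a sequence $h_{1,\infty}=\{h_n\}$ of continuous self-maps of a metric space $(Z,\rho)$, write $h_i^n=h_{n+i-1}\circ\cdots\circ h_i$, $h_{1,\infty}^{[k]}=\{h^k_{k(n-1)+1}\}_{n=1}^\infty$ (its $n$-fold composition from index $1$ is $h_1^{kn}$), and $N_{h_{1,\infty}}(V,\delta)=\{n\in\mathbb{N}:\exists u,v\in V,\ \rho(h_1^n(u),h_1^n(v))>\delta\}$. For $\mathbf{v}=(v_1,\dots,v_r)\in\mathbb{N}^r$, the system is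 multi-sensitive with respect to $\mathbf{v}$ if there is $\delta>0$ such that $\bigcap_{i=1}^r N_{h_{1,\infty}^{[v_i]}}(U_i,\delta)\ne\varnothing$ for all nonempty open $U_1,\dots,U_r$; $\mathcal{N}$-sensitive if multi-sensitive with respect to $(1,\dots,n)$ for every $n$; strongly multi-sensitive if multi-sensitive with respect to every vector in $\mathbb{N}^r$, for every $r$. *)

theory Defs
  imports "HOL-Probability.Probability"
begin

text \<open>Sequences of maps are indexed from 1 (the value at index 0 is irrelevant).
  iter h i n is h_i^n = h_(n+i-1) o ... o h_i, with h_i^0 = id.\<close>

primrec iter :: "(nat \<Rightarrow> 'a \<Rightarrow> 'a) \<Rightarrow> nat \<Rightarrow> nat \<Rightarrow> 'a \<Rightarrow> 'a" where
  "iter h i 0 = id"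
| "iter h i (Suc n) = h (i + n) \<circ> iter h i n"

definition blocks :: "(nat \<Rightarrow> 'a \<Rightarrow> 'a) \<Rightarrow> nat \<Rightarrow> nat \<Rightarrow> 'a \<Rightarrow> 'a" where
  "blocks h k n = iter h (k * (n - 1) + 1) k"

definition mopen_in :: "'a set \<Rightarrow> ('a \<Rightarrow> 'a \<Rightarrow> real) \<Rightarrow> 'a set \<Rightarrow> bool" where
  "mopen_in S d U \<longleftrightarrow> U \<subseteq> S \<and> (\<forall>x\<in>U. \<exists>e>0. \<forall>y\<in>S. d x y < e \<longrightarrow> y \<in> U)"

definition Nset :: "('a \<Rightarrow> 'a \<Rightarrow> real) \<Rightarrow> (nat \<Rightarrow> 'a \<Rightarrow> 'a) \<Rightarrow> 'a set \<Rightarrow> real \<Rightarrow> nat set" where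
  "Nset d h V \<delta> = {n. n \<ge> 1 \<and> (\<exists>u\<in>V. \<exists>v\<in>V. d (iter h 1 n u) (iter h 1 n v) > \<delta>)}"

definition multi_sensitive ::
  "'a set \<Rightarrow> ('a \<Rightarrow> 'a \<Rightarrow> real) \<Rightarrow> (nat \<Rightarrow> 'a \<Rightarrow> 'a) \<Rightarrow> nat list \<Rightarrow> bool" where
  "multi_sensitive S d h vs \<longleftrightarrow>
     (\<exists>\<delta>>0. \<forall>Us :: 'a set list. length Us = length vs \<longrightarrow>
        (\<forall>U\<in>set Us. mopen_in S d U \<and> U \<noteq> {}) \<longrightarrow>
        (\<Inter>i<length vs. Nset d (blocks h (vs ! i)) (Us ! i) \<delta>) \<noteq> {})"

definition N_sensitive :: "'a set \<Rightarrow> ('a \<Rightarrow> 'a \<Rightarrow> real) \<Rightarrow> (nat \<Rightarrow> 'a \<Rightarrow> 'a) \<Rightarrow> bool" where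
  "N_sensitive S d h \<longleftrightarrow> (\<forall>n\<ge>1. multi_sensitive S d h [1..<n+1])"

definition strongly_multi_sensitive ::
  "'a set \<Rightarrow> ('a \<Rightarrow> 'a \<Rightarrow> real) \<Rightarrow> (nat \<Rightarrow> 'a \<Rightarrow> 'a) \<Rightarrow> bool" where
  "strongly_multi_sensitive S d h \<longleftrightarrow>
     (\<forall>vs. vs \<noteq> [] \<longrightarrow> (\<forall>v\<in>set vs. v \<ge> 1) \<longrightarrow> multi_sensitive S d h vs)"

definition unit_borel :: "real measure" where
  "unit_borel = restrict_space borel {0..1}"

definition PM01 :: "real measure set" where
  "PM01 = {M. prob_space M \<and> sets M = sets unit_borel}"

definition nbhd01 :: "real set \<Rightarrow> real \<Rightarrow> real set" where
  "nbhd01 B \<epsilon> = {x \<in> {0..1}. \<exists>b\<in>B. dist x b < \<epsilon>}"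

definition prohorov :: "real measure \<Rightarrow> real measure \<Rightarrow> real" where
  "prohorov \<nu>1 \<nu>2 = Inf {\<epsilon>. \<epsilon> > 0 \<and>
     (\<forall>B\<in>sets unit_borel. measure \<nu>1 B \<le> measure \<nu>2 (nbhd01 B \<epsilon>) + \<epsilon>)}"

definition induced :: "(nat \<Rightarrow> real \<Rightarrow> real) \<Rightarrow> nat \<Rightarrow> real measure \<Rightarrow> real measure" where
  "induced f n \<nu> = distr \<nu> unit_borel (f n)"

end

theory Submission
  imports Defs
begin

text \<open>For a periodic sequence of interval maps, sensitivity already implies cofinite sensitivity:
  for some \<open>\<delta>\<close>, every nonempty open set is \<open>\<delta>\<close>-expanded at all sufficiently large times.
  Sensitivity survives along multiples of the period \<open>k\<close>; by the intermediate value theorem an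
  expanded interval covers a cell of a fine grid after finitely many periods, each cell covers
  another one, so following these coverings leads to a cell covering itself, and such a cell is
  expanded at all times, uniformly by periodicity. Cofinite sensitivity gives multi-sensitivity
  for every vector, so strong multi-sensitivity, \<open>\<N>\<close>-sensitivity and sensitivity coincide.

  The same holds for the induced system once sensitivity is transferred in both directions.
  Every neighbourhood of a measure \<open>\<mu>\<close> contains the push-forwards of \<open>\<mu>\<close> under two step functions
  close to the identity that pick, in each grid cell, two points separated by \<open>f\<^sub>1\<^sup>n\<close>; the images
  of these two measures are far apart in the Prohorov metric. Conversely, the measures concentrated
  near a point form an open set, whose images stay Prohorov-close unless \<open>f\<^sub>1\<^sup>n\<close> separates a
  neighbourhood of the point.\<close>

section \<open>Sensitivity notions for non-autonomous systems\<close>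

lemma iter_add: "iter h i (a + b) = iter h (i + a) b \<circ> iter h i a"
  by (induction b) (auto simp: add.assoc)

lemma iter_blocks: "iter (blocks h v) 1 n = iter h 1 (v * n)"
proof (induction n)
  case (Suc n)
  have "iter h 1 (v * n + v) = iter h (1 + v * n) v \<circ> iter h 1 (v * n)"
    by (rule iter_add)
  then show ?case
    using Suc by (simp add: blocks_def add.commute)
qed simp

lemma Nset_blocks: "v \<ge> 1 \<Longrightarrow> n \<in> Nset d (blocks h v) U \<delta> \<longleftrightarrow> v * n \<in> Nset d h U \<delta>"
  unfolding Nset_def iter_blocks by simp

lemma Nset_mono: "n \<in> Nset d h U \<delta> \<Longrightarrow> U \<subseteq> V \<Longrightarrow> \<delta>' \<le> \<delta> \<Longrightarrow> n \<in> Nset d h V \<delta>'"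
  unfolding Nset_def by (blast intro: order.strict_trans1)

definition sensitive :: "'a set \<Rightarrow> ('a \<Rightarrow> 'a \<Rightarrow> real) \<Rightarrow> (nat \<Rightarrow> 'a \<Rightarrow> 'a) \<Rightarrow> bool" where
  "sensitive S d h \<longleftrightarrow>
     (\<exists>\<delta>>0. \<forall>U. mopen_in S d U \<longrightarrow> U \<noteq> {} \<longrightarrow> Nset d h U \<delta> \<noteq> {})"

definition cofinitely_sensitive :: "'a set \<Rightarrow> ('a \<Rightarrow> 'a \<Rightarrow> real) \<Rightarrow> (nat \<Rightarrow> 'a \<Rightarrow> 'a) \<Rightarrow> bool" where
  "cofinitely_sensitive S d h \<longleftrightarrow>
     (\<exists>\<delta>>0. \<forall>U. mopen_in S d U \<longrightarrow> U \<noteq> {} \<longrightarrow> (\<forall>\<^sub>F n in sequentially. n \<in> Nset d h U \<delta>))"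

lemma finite_uniform_positive:
  fixes P :: "'a \<Rightarrow> real \<Rightarrow> bool"
  assumes "finite A" "\<forall>x\<in>A. \<exists>\<delta>>0. P x \<delta>"
    and mono: "\<And>x \<delta> \<delta>'. P x \<delta> \<Longrightarrow> 0 < \<delta>' \<Longrightarrow> \<delta>' \<le> \<delta> \<Longrightarrow> P x \<delta>'"
  shows "\<exists>\<delta>>0. \<forall>x\<in>A. P x \<delta>"
proof -
  have "\<forall>x\<in>A. \<forall>\<^sub>F \<delta> in at_right 0. P x \<delta>"
  proof
    fix x assume "x \<in> A"
    then obtain \<delta> where "\<delta> > 0" "P x \<delta>"
      using assms(2) by blast
    then show "\<forall>\<^sub>F \<delta> in at_right 0. P x \<delta>"
      unfolding eventually_at_right_field by (blast intro: mono less_imp_le)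
  qed
  then have "\<forall>\<^sub>F \<delta> in at_right (0::real). \<forall>x\<in>A. P x \<delta>"
    by (rule eventually_ball_finite[OF assms(1)])
  then obtain b :: real where "b > 0" "\<forall>\<delta>>0. \<delta> < b \<longrightarrow> (\<forall>x\<in>A. P x \<delta>)"
    unfolding eventually_at_right_field by blast
  then show ?thesis
    by (intro exI[of _ "b / 2"]) simp
qed

lemma cofinitely_sensitive_imp_multi_sensitive:
  assumes "cofinitely_sensitive S d h" "\<forall>v\<in>set vs. v \<ge> 1"
  shows "multi_sensitive S d h vs"
proof -
  obtain \<delta> where "\<delta> > 0" and \<delta>: "\<And>U. mopen_in S d U \<Longrightarrow> U \<noteq> {} \<Longrightarrow>
      \<forall>\<^sub>F n in sequentially. n \<in> Nset d h U \<delta>"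
    using assms(1) unfolding cofinitely_sensitive_def by blast
  have "(\<Inter>i<length vs. Nset d (blocks h (vs ! i)) (Us ! i) \<delta>) \<noteq> {}"
    if "length Us = length vs" "\<forall>U\<in>set Us. mopen_in S d U \<and> U \<noteq> {}" for Us
  proof -
    have "\<forall>i\<in>{..<length vs}. \<forall>\<^sub>F n in sequentially. n \<in> Nset d (blocks h (vs ! i)) (Us ! i) \<delta>"
    proof
      fix i assume i: "i \<in> {..<length vs}"
      then have v: "vs ! i \<ge> 1"
        using assms(2) by simp
      have "Us ! i \<in> set Us"
        using i that(1) by simp
      then have "\<forall>\<^sub>F n in sequentially. n \<in> Nset d h (Us ! i) \<delta>"
        using \<delta> that(2) by blast
      then have "\<forall>\<^sub>F n in sequentially. vs ! i * n \<in> Nset d h (Us ! i) \<delta>"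
        by (rule eventually_compose_filterlim[OF _ mult_nat_left_at_top]) (use v in simp)
      then show "\<forall>\<^sub>F n in sequentially. n \<in> Nset d (blocks h (vs ! i)) (Us ! i) \<delta>"
        by (rule eventually_mono) (simp add: Nset_blocks[OF v])
    qed
    then have "\<forall>\<^sub>F n in sequentially. \<forall>i\<in>{..<length vs}. n \<in> Nset d (blocks h (vs ! i)) (Us ! i) \<delta>"
      by (rule eventually_ball_finite[rotated]) simp
    then show ?thesis
      using eventually_happens'[OF sequentially_bot] by blast
  qed
  then show ?thesis
    unfolding multi_sensitive_def using \<open>\<delta> > 0\<close> by blast
qed

lemma cofinitely_sensitive_imp_strongly_multi_sensitive:
  "cofinitely_sensitive S d h \<Longrightarrow> strongly_multi_sensitive S d h"
  unfolding strongly_multi_sensitive_def by (auto intro: cofinitely_sensitive_imp_multi_sensitive)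

lemma cofinitely_sensitive_imp_N_sensitive:
  "cofinitely_sensitive S d h \<Longrightarrow> N_sensitive S d h"
  unfolding N_sensitive_def by (auto intro!: cofinitely_sensitive_imp_multi_sensitive)

lemma strongly_multi_sensitive_imp_N_sensitive:
  "strongly_multi_sensitive S d h \<Longrightarrow> N_sensitive S d h"
  unfolding strongly_multi_sensitive_def N_sensitive_def by auto

lemma N_sensitive_imp_sensitive:
  assumes "N_sensitive S d h"
  shows "sensitive S d h"
proof -
  have "multi_sensitive S d h [1..<1 + 1]"
    using assms unfolding N_sensitive_def by blast
  then have "multi_sensitive S d h [1]"
    by simp
  then obtain \<delta> where "\<delta> > 0" and \<delta>: "\<forall>Us. length Us = 1 \<longrightarrow>
      (\<forall>U\<in>set Us. mopen_in S d U \<and> U \<noteq> {}) \<longrightarrow>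
      (\<Inter>i<1. Nset d (blocks h ([1] ! i)) (Us ! i) \<delta>) \<noteq> {}"
    unfolding multi_sensitive_def by auto
  have "Nset d (blocks h 1) U \<delta> = Nset d h U \<delta>" for U
    by (simp add: set_eq_iff Nset_blocks)
  then have "Nset d h U \<delta> \<noteq> {}" if "mopen_in S d U" "U \<noteq> {}" for U
    using \<delta>[rule_format, of "[U]"] that by (simp add: lessThan_Suc)
  then show ?thesis
    unfolding sensitive_def using \<open>\<delta> > 0\<close> by blast
qed

lemma cofinitely_sensitive_imp_sensitive:
  "cofinitely_sensitive S d h \<Longrightarrow> sensitive S d h"
  by (intro N_sensitive_imp_sensitive cofinitely_sensitive_imp_N_sensitive)

lemma sensitivity_notions_coincide:
  assumes "sensitive S d h \<Longrightarrow> cofinitely_sensitive S d h"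
  shows "strongly_multi_sensitive S d h \<longleftrightarrow> sensitive S d h"
    and "N_sensitive S d h \<longleftrightarrow> sensitive S d h"
  by (metis assms N_sensitive_imp_sensitive strongly_multi_sensitive_imp_N_sensitive
      cofinitely_sensitive_imp_strongly_multi_sensitive)
    (metis assms N_sensitive_imp_sensitive cofinitely_sensitive_imp_N_sensitive)

section \<open>The unit interval and its grids\<close>

lemma mopen_in_iff_openin: "mopen_in S dist U \<longleftrightarrow> openin (top_of_set S) U"
  unfolding mopen_in_def openin_euclidean_subtopology_iff by (simp add: dist_commute)

lemma nbhd01_singleton: "nbhd01 {p} e = ball p e \<inter> {0..1}"
  unfolding nbhd01_def by (auto simp: dist_commute)

lemma unit_interval_open_contains_nbhd:
  assumes "mopen_in {0..1} dist U" "p \<in> U"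
  obtains e where "e > 0" "nbhd01 {p} e \<subseteq> U"
  using assms unfolding mopen_in_iff_openin openin_contains_ball nbhd01_singleton by blast

lemma unit_interval_nbhd_open: "mopen_in {0..1} dist (nbhd01 {p} e)"
  unfolding mopen_in_iff_openin nbhd01_singleton by (metis Int_commute open_ball openin_open_Int)

lemma unit_interval_subinterval_open:
  "0 \<le> a \<Longrightarrow> b \<le> (1::real) \<Longrightarrow> mopen_in {0..1} dist {a<..<b}"
  unfolding mopen_in_iff_openin
  by (metis Int_absorb1 greaterThanLessThan_subseteq_atLeastAtMost_iff openin_open_Int open_greaterThanLessThan)

definition grid_interval :: "nat \<Rightarrow> nat \<Rightarrow> real set" where
  "grid_interval m c = {real c / m .. (real c + 1) / m}"

lemma fine_grid_exists:
  assumes "d > 0"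
  obtains m :: nat where "m \<ge> 1" "2 / m < d"
proof -
  obtain m0 where "inverse (real (Suc m0)) < d / 2"
    using reals_Archimedean assms half_gt_zero by blast
  then show thesis
    using that[of "Suc m0"] by (simp add: inverse_eq_divide)
qed

lemma grid_interval_subset_unit: "c < m \<Longrightarrow> grid_interval m c \<subseteq> {0..1}"
  unfolding grid_interval_def by (auto simp: field_simps)

lemma grid_interval_endpoints:
  "m \<ge> 1 \<Longrightarrow> real c / m \<in> grid_interval m c \<and> (real c + 1) / m \<in> grid_interval m c
     \<and> real c / m \<noteq> (real c + 1) / m"
  unfolding grid_interval_def by (auto simp: field_simps)

lemma open_grid_interval:
  assumes "m \<ge> 1" "c < m"
  shows "mopen_in {0..1} dist {real c / m<..<(real c + 1) / m}"
    and "{real c / m<..<(real c + 1) / m} \<noteq> {}"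
    and "{real c / m<..<(real c + 1) / m} \<subseteq> grid_interval m c"
proof -
  have m: "real m > 0"
    using assms(1) by simp
  have "(real c + 1) / m \<le> 1"
    using assms(2) m by (simp add: field_simps)
  then show "mopen_in {0..1} dist {real c / m<..<(real c + 1) / m}"
    by (simp add: unit_interval_subinterval_open)
  have "(real c + 1 / 2) / m \<in> {real c / m<..<(real c + 1) / m}"
    using m by (simp add: field_simps)
  then show "{real c / m<..<(real c + 1) / m} \<noteq> {}"
    by blast
  show "{real c / m<..<(real c + 1) / m} \<subseteq> grid_interval m c"
    unfolding grid_interval_def by auto
qed

lemma long_interval_contains_grid_interval:
  fixes x y :: real
  assumes "m \<ge> 1" "2 / m < y - x" "0 \<le> x" "y \<le> 1"
  obtains c where "c < m" "grid_interval m c \<subseteq> {x..y}"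
proof -
  define c where "c = nat \<lceil>x * m\<rceil>"
  have m: "real m > 0"
    using assms(1) by simp
  have "real c = \<lceil>x * m\<rceil>"
    unfolding c_def using assms(3) by simp
  then have lower: "x * m \<le> real c" and upper: "real c + 1 < x * m + 2"
    by linarith+
  have "x \<le> real c / m"
    using lower m by (simp add: field_simps)
  moreover have "(real c + 1) / m < x + 2 / m"
  proof -
    have "(real c + 1) / m < (x * m + 2) / m"
      using upper m by (rule divide_strict_right_mono)
    also have "\<dots> = x + 2 / m"
      using m by (simp add: field_simps)
    finally show ?thesis .
  qed
  moreover have "c < m"
  proof -
    have "(real c + 1) / m < 1"
      using calculation(2) assms(2,4) by linarith
    then show ?thesis
      using m by (simp add: field_simps)
  qed
  ultimately show thesis
    using that[of c] assms(2) unfolding grid_interval_def by force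
qed

lemma finite_relation_reaches_cycle:
  assumes "finite A" "x \<in> A" and succ: "\<And>y. y \<in> A \<Longrightarrow> \<exists>z\<in>A. R y z"
  shows "\<exists>y\<in>A. R\<^sup>*\<^sup>* x y \<and> R\<^sup>+\<^sup>+ y y"
proof -
  obtain \<sigma> where \<sigma>: "\<And>y. y \<in> A \<Longrightarrow> \<sigma> y \<in> A \<and> R y (\<sigma> y)"
    using succ by metis
  define s where "s i = (\<sigma> ^^ i) x" for i
  have s_in: "s i \<in> A" for i
    by (induction i) (simp_all add: s_def assms(2) \<sigma>)
  have s_step: "R (s i) (s (Suc i))" for i
    using \<sigma>[OF s_in[of i]] by (simp add: s_def)
  have reach: "R\<^sup>*\<^sup>* x (s i)" for i
  proof (induction i)
    case (Suc i)
    then show ?case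
      using s_step by (rule rtranclp.rtrancl_into_rtrancl)
  qed (simp add: s_def)
  have cycle: "R\<^sup>+\<^sup>+ (s i) (s (Suc (i + j)))" for i j
    by (induction j) (auto intro: tranclp.trancl_into_trancl s_step)
  have "card (s ` {..card A}) \<le> card A"
    using s_in by (intro card_mono[OF assms(1)]) auto
  then have "\<not> inj_on s {..card A}"
    by (intro pigeonhole) simp
  then obtain i j where "i < j" "s i = s j"
    unfolding inj_on_def by (metis linorder_neqE_nat)
  moreover obtain d where "j = Suc (i + d)"
    using \<open>i < j\<close> less_iff_Suc_add by blast
  ultimately show ?thesis
    using s_in reach cycle by metis
qed

section \<open>Periodic systems on the unit interval\<close>

locale periodic_interval_system =
  fixes f :: "nat \<Rightarrow> real \<Rightarrow> real" and k :: nat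
  assumes continuous: "\<And>n. n \<ge> 1 \<Longrightarrow> continuous_on {0..1} (f n)"
    and maps_unit: "\<And>n. n \<ge> 1 \<Longrightarrow> f n ` {0..1} \<subseteq> {0..1}"
    and period_pos: "k \<ge> 1"
    and periodic: "\<forall>l\<ge>1. \<forall>j\<in>{1..k}. f (j + k * l) = f j"
begin

lemma periodic_shift: "i \<ge> 1 \<Longrightarrow> f (i + k * l) = f i"
proof -
  assume "i \<ge> 1"
  define j q where "j = (i - 1) mod k + 1" and "q = (i - 1) div k"
  have i: "i = j + k * q"
    using \<open>i \<ge> 1\<close> unfolding j_def q_def by simp
  have j: "j \<in> {1..k}"
    using period_pos by (simp add: j_def Suc_leI)
  have "f (j + k * r) = f j" for r
    using periodic j by (cases r) (auto simp del: mult_Suc_right)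
  then show ?thesis
    using i by (metis add.assoc distrib_left)
qed

lemma iter_periodic: "i \<ge> 1 \<Longrightarrow> iter f (i + k * l) n = iter f i n"
proof (induction n)
  case (Suc n)
  have "f (i + k * l + n) = f (i + n)"
    using periodic_shift[of "i + n" l] Suc.prems by (simp add: algebra_simps)
  then show ?case
    using Suc by simp
qed simp

lemma iter_continuous_maps_unit:
  "continuous_on {0..1} (iter f 1 n) \<and> iter f 1 n ` {0..1} \<subseteq> {0..1}"
proof (induction n)
  case (Suc n)
  then show ?case
    using continuous[of "1 + n"] maps_unit[of "1 + n"]
    by (auto intro: continuous_on_compose2)
qed simp

lemma continuous_on_iter: "continuous_on {0..1} (iter f 1 n)"
  using iter_continuous_maps_unit by blast

lemma iter_in_unit: "x \<in> {0..1} \<Longrightarrow> iter f 1 n x \<in> {0..1}"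
  using iter_continuous_maps_unit by blast

lemma iter_period_split: "iter f 1 (k * a + t) = iter f 1 t \<circ> iter f 1 (k * a)"
  using iter_add[of f 1 "k * a" t] iter_periodic[of 1 a t] by (simp add: add.commute)

definition covers :: "nat \<Rightarrow> real set \<Rightarrow> real set \<Rightarrow> bool" where
  "covers a A B \<longleftrightarrow> B \<subseteq> iter f 1 (k * a) ` A"

lemma covers_refl: "covers 0 A A"
  by (simp add: covers_def)

lemma covers_trans:
  assumes "covers a A B" "covers b B C"
  shows "covers (a + b) A C"
proof -
  have "iter f 1 (k * (a + b)) ` A = iter f 1 (k * b) ` iter f 1 (k * a) ` A"
    using iter_period_split[of a "k * b"] by (simp add: distrib_left image_comp)
  then show ?thesis
    using assms unfolding covers_def by (metis image_mono order_trans)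
qed

lemma Nset_covers:
  assumes "covers a A B" "n \<in> Nset dist f B \<delta>"
  shows "k * a + n \<in> Nset dist f A \<delta>"
proof -
  obtain u v where "u \<in> B" "v \<in> B" "n \<ge> 1" "\<delta> < dist (iter f 1 n u) (iter f 1 n v)"
    using assms(2) unfolding Nset_def by blast
  moreover obtain u' v' where "u' \<in> A" "v' \<in> A" "u = iter f 1 (k * a) u'" "v = iter f 1 (k * a) v'"
    using assms(1) \<open>u \<in> B\<close> \<open>v \<in> B\<close> unfolding covers_def by blast
  ultimately have "\<delta> < dist (iter f 1 (k * a + n) u') (iter f 1 (k * a + n) v')"
    unfolding iter_period_split by simp
  then show ?thesis
    unfolding Nset_def using \<open>u' \<in> A\<close> \<open>v' \<in> A\<close> \<open>n \<ge> 1\<close> by auto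
qed

lemma eventually_Nset_covers:
  assumes "covers a A B" "\<forall>\<^sub>F n in sequentially. n \<in> Nset dist f B \<delta>"
  shows "\<forall>\<^sub>F n in sequentially. n \<in> Nset dist f A \<delta>"
proof -
  obtain N where "\<And>n. n \<ge> N \<Longrightarrow> n \<in> Nset dist f B \<delta>"
    using assms(2) unfolding eventually_sequentially by blast
  then have "k * a + (n - k * a) \<in> Nset dist f A \<delta>" if "n \<ge> k * a + N" for n
    using that by (intro Nset_covers[OF assms(1)]) simp
  then show ?thesis
    unfolding eventually_sequentially by (metis add_leE le_add_diff_inverse)
qed

definition sensitive_at_periods :: "real \<Rightarrow> bool" where
  "sensitive_at_periods d \<longleftrightarrow> (\<forall>U. mopen_in {0..1} dist U \<longrightarrow> U \<noteq> {} \<longrightarrow>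
     (\<exists>a. \<exists>u\<in>U. \<exists>v\<in>U. d \<le> \<bar>iter f 1 (k * a) u - iter f 1 (k * a) v\<bar>))"

lemma iter_below_period_uniformly_continuous:
  assumes "\<delta> > 0"
  obtains d where "d > 0" "\<And>t x y. t < k \<Longrightarrow> x \<in> {0..1} \<Longrightarrow> y \<in> {0..1} \<Longrightarrow>
    \<bar>x - y\<bar> < d \<Longrightarrow> \<bar>iter f 1 t x - iter f 1 t y\<bar> < \<delta>"
proof -
  have "\<exists>d>0. \<forall>x\<in>{0..1}. \<forall>y\<in>{0..1}. \<bar>x - y\<bar> < d \<longrightarrow> \<bar>iter f 1 t x - iter f 1 t y\<bar> < \<delta>" for t
  proof -
    have "uniformly_continuous_on {0..1} (iter f 1 t)"
      by (rule compact_uniformly_continuous[OF continuous_on_iter]) simp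
    then show ?thesis
      using \<open>\<delta> > 0\<close> unfolding uniformly_continuous_on_def dist_real_def by blast
  qed
  then have "\<exists>d>0. \<forall>t\<in>{..<k}. \<forall>x\<in>{0..1}. \<forall>y\<in>{0..1}.
      \<bar>x - y\<bar> < d \<longrightarrow> \<bar>iter f 1 t x - iter f 1 t y\<bar> < \<delta>"
    by (intro finite_uniform_positive) (simp, blast, meson order_less_le_trans)
  then show thesis
    using that by blast
qed

text \<open>Separation at a time \<open>k * a + t\<close> with \<open>t < k\<close> forces separation at time \<open>k * a\<close>,
  since the finitely many maps \<open>iter f 1 t\<close> are uniformly continuous.\<close>

lemma sensitive_imp_sensitive_at_periods:
  assumes "sensitive {0..1} dist f"
  obtains d where "d > 0" "sensitive_at_periods d"
proof -
  obtain \<delta> where "\<delta> > 0" and \<delta>: "\<And>U. mopen_in {0..1} dist U \<Longrightarrow> U \<noteq> {} \<Longrightarrow> Nset dist f U \<delta> \<noteq> {}"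
    using assms unfolding sensitive_def by blast
  obtain d where "d > 0" and d: "\<And>t x y. t < k \<Longrightarrow> x \<in> {0..1} \<Longrightarrow> y \<in> {0..1} \<Longrightarrow>
      \<bar>x - y\<bar> < d \<Longrightarrow> \<bar>iter f 1 t x - iter f 1 t y\<bar> < \<delta>"
    using iter_below_period_uniformly_continuous[OF \<open>\<delta> > 0\<close>] by blast
  have "\<exists>a. \<exists>u\<in>U. \<exists>v\<in>U. d \<le> \<bar>iter f 1 (k * a) u - iter f 1 (k * a) v\<bar>"
    if U: "mopen_in {0..1} dist U" "U \<noteq> {}" for U :: "real set"
  proof -
    obtain n u v where "u \<in> U" "v \<in> U" and far: "\<delta> < \<bar>iter f 1 n u - iter f 1 n v\<bar>"
      using \<delta>[OF U] unfolding Nset_def dist_real_def by blast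
    define a t where "a = n div k" and "t = n mod k"
    have split: "iter f 1 n = iter f 1 t \<circ> iter f 1 (k * a)"
      unfolding a_def t_def by (metis iter_period_split div_mult_mod_eq mult.commute)
    have in_unit: "iter f 1 (k * a) w \<in> {0..1}" if "w \<in> U" for w
      using U(1) that unfolding mopen_in_def by (blast intro: iter_in_unit)
    have "t < k"
      using period_pos by (simp add: t_def)
    then have "\<not> \<bar>iter f 1 (k * a) u - iter f 1 (k * a) v\<bar> < d"
      using d[of t, OF _ in_unit in_unit] far \<open>u \<in> U\<close> \<open>v \<in> U\<close> split by fastforce
    then show ?thesis
      using \<open>u \<in> U\<close> \<open>v \<in> U\<close> by (auto simp: not_less)
  qed
  then show thesis
    using that[OF \<open>d > 0\<close>] unfolding sensitive_at_periods_def by blast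
qed

lemma iter_image_covers_grid_interval:
  assumes "is_interval V" "V \<subseteq> {0..1}" "u \<in> V" "v \<in> V" "m \<ge> 1"
    and "2 / m < \<bar>iter f 1 n u - iter f 1 n v\<bar>"
  obtains c where "c < m" "grid_interval m c \<subseteq> iter f 1 n ` V"
proof -
  let ?g = "iter f 1 n"
  define x y where "x = min (?g u) (?g v)" and "y = max (?g u) (?g v)"
  have "is_interval (?g ` V)"
    using assms(1,2) continuous_on_subset[OF continuous_on_iter[of n]]
    by (simp add: is_interval_connected_1 connected_continuous_image)
  moreover have "x \<in> ?g ` V" "y \<in> ?g ` V"
    using assms(3,4) by (auto simp: x_def y_def min_def max_def)
  ultimately have "{x..y} \<subseteq> ?g ` V"
    unfolding is_interval_1 by auto
  have "?g u \<in> {0..1}" "?g v \<in> {0..1}"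
    using assms(2-4) by (blast intro: iter_in_unit)+
  then have "0 \<le> x" "y \<le> 1" "2 / m < y - x"
    using assms(6) by (auto simp: x_def y_def min_def max_def)
  then obtain c where "c < m" "grid_interval m c \<subseteq> {x..y}"
    using long_interval_contains_grid_interval[OF assms(5)] by blast
  then show thesis
    using that \<open>{x..y} \<subseteq> ?g ` V\<close> by blast
qed

lemma grid_interval_covers_grid_interval:
  assumes "sensitive_at_periods d" "m \<ge> 1" "2 / m < d" "c < m"
  obtains a c' where "a \<ge> 1" "c' < m" "covers a (grid_interval m c) (grid_interval m c')"
proof -
  define V where "V = {real c / m<..<(real c + 1) / m}"
  note V = open_grid_interval[OF assms(2,4), folded V_def]
  obtain a u v where uv: "u \<in> V" "v \<in> V"
    and far: "d \<le> \<bar>iter f 1 (k * a) u - iter f 1 (k * a) v\<bar>"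
    using assms(1) V(1,2) unfolding sensitive_at_periods_def by blast
  have "a \<noteq> 0"
  proof
    assume "a = 0"
    then have "d \<le> \<bar>u - v\<bar>"
      using far by simp
    moreover have "\<bar>u - v\<bar> < 1 / m"
      using uv unfolding V_def by (auto simp: add_divide_distrib abs_less_iff)
    moreover have "1 / m < 2 / real m"
      using assms(2) by (simp add: divide_strict_right_mono)
    ultimately show False
      using assms(3) by linarith
  qed
  have "is_interval V" "V \<subseteq> {0..1}"
    using V(3) grid_interval_subset_unit[OF assms(4)] unfolding V_def is_interval_1 by auto
  moreover have "2 / m < \<bar>iter f 1 (k * a) u - iter f 1 (k * a) v\<bar>"
    using far assms(3) by linarith
  ultimately obtain c' where "c' < m" and c': "grid_interval m c' \<subseteq> iter f 1 (k * a) ` V"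
    using iter_image_covers_grid_interval[OF _ _ uv assms(2)] by blast
  have "covers a (grid_interval m c) (grid_interval m c')"
    unfolding covers_def using c' image_mono[OF V(3), of "iter f 1 (k * a)"] by (rule order_trans)
  moreover have "a \<ge> 1"
    using \<open>a \<noteq> 0\<close> by simp
  ultimately show thesis
    using that \<open>c' < m\<close> by blast
qed

lemma covers_multiple: "covers M P P \<Longrightarrow> covers (M * a) P P"
proof (induction a)
  case (Suc a)
  then show ?case
    using covers_trans[OF Suc(1)[OF Suc(2)] Suc(2)] by (simp add: algebra_simps)
qed (simp add: covers_refl)

lemma self_covering_not_collapsed:
  assumes "covers M P P" "M \<ge> 1" "x \<in> P" "y \<in> P" "x \<noteq> y"
  obtains x' y' where "x' \<in> P" "y' \<in> P" "iter f 1 t x' \<noteq> iter f 1 t y'"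
proof -
  define r where "r = k * (M * Suc t) - t"
  have "1 * (1 * Suc t) \<le> k * (M * Suc t)"
    using period_pos assms(2) by (intro mult_le_mono order_refl)
  then have "t \<le> k * (M * Suc t)"
    by simp
  then have "iter f 1 (k * (M * Suc t)) = iter f (1 + t) r \<circ> iter f 1 t"
    unfolding r_def by (metis iter_add le_add_diff_inverse)
  moreover obtain x' y' where "x' \<in> P" "y' \<in> P"
    "x = iter f 1 (k * (M * Suc t)) x'" "y = iter f 1 (k * (M * Suc t)) y'"
    using covers_multiple[OF assms(1), of "Suc t"] assms(3,4) unfolding covers_def by blast
  ultimately have "iter f 1 t x' \<noteq> iter f 1 t y'"
    using assms(5) by auto
  then show thesis
    using that \<open>x' \<in> P\<close> \<open>y' \<in> P\<close> by blast
qed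

text \<open>By periodicity every time \<open>n \<ge> 1\<close> is reduced to one of the finitely many times
  \<open>t \<in> {1..k * M}\<close>, at which \<open>P\<close> is not collapsed.\<close>

lemma self_covering_expanding:
  assumes cycle: "covers M P P" "M \<ge> 1" and "x \<in> P" "y \<in> P" "x \<noteq> y"
  obtains \<eta> where "\<eta> > 0" "\<And>n. n \<ge> 1 \<Longrightarrow> n \<in> Nset dist f P \<eta>"
proof -
  have "\<exists>\<eta>>0. t \<in> Nset dist f P \<eta>" if "t \<ge> 1" for t
  proof -
    obtain x' y' where "x' \<in> P" "y' \<in> P" "iter f 1 t x' \<noteq> iter f 1 t y'"
      using self_covering_not_collapsed[OF assms] by blast
    moreover have "dist (iter f 1 t x') (iter f 1 t y') / 2 < dist (iter f 1 t x') (iter f 1 t y')"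
      using calculation(3) by simp
    ultimately have "t \<in> Nset dist f P (dist (iter f 1 t x') (iter f 1 t y') / 2)"
      unfolding Nset_def using \<open>t \<ge> 1\<close> by blast
    then show ?thesis
      using \<open>iter f 1 t x' \<noteq> iter f 1 t y'\<close> by (intro exI conjI) simp_all
  qed
  then have "\<exists>\<eta>>0. \<forall>t\<in>{1..k * M}. t \<in> Nset dist f P \<eta>"
    by (intro finite_uniform_positive) (auto intro: Nset_mono)
  then obtain \<eta> where "\<eta> > 0" and \<eta>: "\<And>t. t \<in> {1..k * M} \<Longrightarrow> t \<in> Nset dist f P \<eta>"
    by blast
  have "n \<in> Nset dist f P \<eta>" if "n \<ge> 1" for n
  proof -
    define a t where "a = (n - 1) div (k * M)" and "t = (n - 1) mod (k * M) + 1"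
    have "k * M > 0"
      using period_pos cycle(2) by simp
    then have "t \<in> {1..k * M}"
      unfolding t_def by (simp add: Suc_leI)
    have "n - 1 = k * M * a + (n - 1) mod (k * M)"
      unfolding a_def by simp
    then have "n = k * (M * a) + t"
      unfolding t_def using \<open>n \<ge> 1\<close> by (simp add: mult.assoc)
    then show ?thesis
      using Nset_covers[OF covers_multiple[OF cycle(1)] \<eta>[OF \<open>t \<in> {1..k * M}\<close>]] by simp
  qed
  then show thesis
    using that \<open>\<eta> > 0\<close> by blast
qed

lemma rtranclp_covers:
  "(\<lambda>i j. \<exists>a\<ge>1. covers a (P i) (P j))\<^sup>*\<^sup>* i j \<Longrightarrow> \<exists>a. covers a (P i) (P j)"
proof (induction rule: rtranclp_induct)
  case base
  then show ?case
    using covers_refl by blast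
next
  case step
  then show ?case
    using covers_trans by blast
qed

lemma tranclp_covers:
  "(\<lambda>i j. \<exists>a\<ge>1. covers a (P i) (P j))\<^sup>+\<^sup>+ i j \<Longrightarrow> \<exists>a\<ge>1. covers a (P i) (P j)"
proof (induction rule: tranclp_induct)
  case (step j j')
  then obtain a b where "a \<ge> 1" "covers a (P i) (P j)" "covers b (P j) (P j')"
    by blast
  then show ?case
    using covers_trans by (intro exI[of _ "a + b"]) simp
qed blast

text \<open>Following the covering relation on the finitely many grid intervals leads from any of
  them to one that covers itself.\<close>

lemma grid_interval_eventually_expanding:
  assumes "sensitive_at_periods d" "m \<ge> 1" "2 / m < d" "c < m"
  obtains \<eta> where "\<eta> > 0" "\<forall>\<^sub>F n in sequentially. n \<in> Nset dist f (grid_interval m c) \<eta>"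
proof -
  let ?P = "grid_interval m" and ?R = "\<lambda>c c'. \<exists>a\<ge>1. covers a (grid_interval m c) (grid_interval m c')"
  have "\<exists>c'\<in>{..<m}. ?R c c'" if "c \<in> {..<m}" for c
  proof -
    from that have "c < m"
      by simp
    then obtain a c' where "a \<ge> 1" "c' < m" "covers a (?P c) (?P c')"
      by (rule grid_interval_covers_grid_interval[OF assms(1-3)])
    then show ?thesis
      by auto
  qed
  then obtain c' where "c' < m" "?R\<^sup>*\<^sup>* c c'" "?R\<^sup>+\<^sup>+ c' c'"
    using finite_relation_reaches_cycle[of "{..<m}" c ?R] assms(4) by auto
  obtain T where T: "covers T (?P c) (?P c')"
    using rtranclp_covers[of ?P, OF \<open>?R\<^sup>*\<^sup>* c c'\<close>] by blast
  obtain M where "M \<ge> 1" "covers M (?P c') (?P c')"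
    using tranclp_covers[of ?P, OF \<open>?R\<^sup>+\<^sup>+ c' c'\<close>] by blast
  moreover have "real c' / m \<in> ?P c'" "(real c' + 1) / m \<in> ?P c'" "real c' / m \<noteq> (real c' + 1) / m"
    using grid_interval_endpoints[OF assms(2)] by blast+
  ultimately obtain \<eta> where "\<eta> > 0" and \<eta>: "\<And>n. n \<ge> 1 \<Longrightarrow> n \<in> Nset dist f (?P c') \<eta>"
    using self_covering_expanding by blast
  have "\<forall>\<^sub>F n in sequentially. n \<in> Nset dist f (?P c') \<eta>"
    unfolding eventually_sequentially using \<eta> by blast
  then show thesis
    using that[OF \<open>\<eta> > 0\<close> eventually_Nset_covers[OF T]] by blast
qed

lemma open_set_covers_grid_interval:
  assumes "sensitive_at_periods d" "m \<ge> 1" "2 / m < d" "mopen_in {0..1} dist U" "U \<noteq> {}"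
  obtains a c where "c < m" "covers a U (grid_interval m c)"
proof -
  obtain p where "p \<in> U"
    using assms(5) by blast
  then obtain e where "e > 0" and "nbhd01 {p} e \<subseteq> U"
    using assms(4) unit_interval_open_contains_nbhd by blast
  let ?V = "nbhd01 {p} e"
  have "p \<in> ?V"
    using \<open>p \<in> U\<close> assms(4) \<open>e > 0\<close> unfolding mopen_in_def nbhd01_singleton by auto
  then obtain a u v where uv: "u \<in> ?V" "v \<in> ?V"
    and "d \<le> \<bar>iter f 1 (k * a) u - iter f 1 (k * a) v\<bar>"
    using assms(1) unit_interval_nbhd_open unfolding sensitive_at_periods_def by blast
  then have far: "2 / m < \<bar>iter f 1 (k * a) u - iter f 1 (k * a) v\<bar>"
    using assms(3) by linarith
  have "is_interval ?V" "?V \<subseteq> {0..1}"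
    unfolding nbhd01_singleton by (simp_all add: is_interval_Int is_interval_cc is_interval_ball_real)
  then obtain c where "c < m" and c: "grid_interval m c \<subseteq> iter f 1 (k * a) ` ?V"
    using iter_image_covers_grid_interval[OF _ _ uv assms(2) far] by blast
  have "covers a U (grid_interval m c)"
    unfolding covers_def using c image_mono[OF \<open>?V \<subseteq> U\<close>, of "iter f 1 (k * a)"] by (rule order_trans)
  then show thesis
    using that \<open>c < m\<close> by blast
qed

lemma sensitive_imp_cofinitely_sensitive:
  assumes "sensitive {0..1} dist f"
  shows "cofinitely_sensitive {0..1} dist f"
proof -
  obtain d where "d > 0" and d: "sensitive_at_periods d"
    using assms sensitive_imp_sensitive_at_periods by blast
  obtain m :: nat where m: "m \<ge> 1" "2 / m < d"
    using fine_grid_exists[OF \<open>d > 0\<close>] by blast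
  have "\<exists>\<eta>>0. \<forall>c\<in>{..<m}. \<forall>\<^sub>F n in sequentially. n \<in> Nset dist f (grid_interval m c) \<eta>"
  proof (rule finite_uniform_positive)
    show "\<forall>c\<in>{..<m}. \<exists>\<eta>>0. \<forall>\<^sub>F n in sequentially. n \<in> Nset dist f (grid_interval m c) \<eta>"
      using grid_interval_eventually_expanding[OF d m] by blast
  qed (auto elim!: eventually_mono intro: Nset_mono)
  then obtain \<eta> where "\<eta> > 0"
    and \<eta>: "\<And>c. c < m \<Longrightarrow> \<forall>\<^sub>F n in sequentially. n \<in> Nset dist f (grid_interval m c) \<eta>"
    by blast
  have "\<forall>\<^sub>F n in sequentially. n \<in> Nset dist f U \<eta>"
    if U: "mopen_in {0..1} dist U" "U \<noteq> {}" for U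
  proof -
    obtain a c where "c < m" "covers a U (grid_interval m c)"
      using open_set_covers_grid_interval[OF d m U] by blast
    then show ?thesis
      using eventually_Nset_covers \<eta> by blast
  qed
  then show ?thesis
    unfolding cofinitely_sensitive_def using \<open>\<eta> > 0\<close> by blast
qed

end

section \<open>Probability measures on the unit interval\<close>

lemma space_unit_borel [simp]: "space unit_borel = {0..1}"
  by (simp add: unit_borel_def space_restrict_space)

lemma sets_unit_borel_iff: "A \<in> sets unit_borel \<longleftrightarrow> A \<subseteq> {0..1} \<and> A \<in> sets borel"
  unfolding unit_borel_def by (rule sets_restrict_space_iff) simp

lemma PM01D:
  assumes "\<mu> \<in> PM01"
  shows "prob_space \<mu>" "sets \<mu> = sets unit_borel" "space \<mu> = {0..1}"
  using assms sets_eq_imp_space_eq[of \<mu> unit_borel] unfolding PM01_def by auto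

lemma measurable_PM01: "\<mu> \<in> PM01 \<Longrightarrow> measurable \<mu> N = measurable unit_borel N"
  by (intro measurable_cong_sets) (simp_all add: PM01D)

lemma measurable_unit_borelI:
  assumes "continuous_on {0..1} h" "h ` {0..1} \<subseteq> {0..1}"
  shows "h \<in> unit_borel \<rightarrow>\<^sub>M unit_borel"
  unfolding unit_borel_def
  using assms borel_measurable_continuous_on_restrict[OF assms(1)]
  by (intro measurable_restrict_space2) (auto simp: space_restrict_space)

lemma measurable_unit_borelD:
  assumes "h \<in> unit_borel \<rightarrow>\<^sub>M unit_borel"
  shows "h \<in> unit_borel \<rightarrow>\<^sub>M borel" "x \<in> {0..1} \<Longrightarrow> h x \<in> {0..1}"
  using assms measurable_space[OF assms, of x]
  unfolding unit_borel_def by (auto simp: measurable_restrict_space2_iff space_restrict_space)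

lemma distr_in_PM01: "\<mu> \<in> PM01 \<Longrightarrow> h \<in> unit_borel \<rightarrow>\<^sub>M unit_borel \<Longrightarrow> distr \<mu> unit_borel h \<in> PM01"
  unfolding PM01_def by (auto intro: prob_space.prob_space_distr simp: measurable_PM01[unfolded PM01_def])

lemma measure_distr_unit_borel:
  assumes "\<mu> \<in> PM01" "h \<in> unit_borel \<rightarrow>\<^sub>M unit_borel" "B \<in> sets unit_borel"
  shows "measure (distr \<mu> unit_borel h) B = measure \<mu> (h -` B \<inter> {0..1})"
  using assms by (simp add: measure_distr measurable_PM01 PM01D)

lemma vimage_in_sets_PM01:
  assumes "\<mu> \<in> PM01" "h \<in> unit_borel \<rightarrow>\<^sub>M unit_borel" "B \<in> sets borel"
  shows "h -` B \<inter> {0..1} \<in> sets \<mu>"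
  using measurable_sets[OF measurable_unit_borelD(1)[OF assms(2)] assms(3)] by (simp add: PM01D[OF assms(1)])

lemma nbhd01_in_sets: "nbhd01 B e \<in> sets unit_borel"
proof -
  have "nbhd01 B e = (\<Union>b\<in>B. ball b e) \<inter> {0..1}"
    unfolding nbhd01_def by (auto simp: dist_commute)
  moreover have "(\<Union>b\<in>B. ball b e) \<inter> {0..1} \<in> sets borel"
    using borel_open[OF open_UN[of B "\<lambda>b. ball b e"]] by simp
  ultimately show ?thesis
    unfolding sets_unit_borel_iff by simp
qed

lemma nbhd01_mono: "e \<le> e' \<Longrightarrow> nbhd01 B e \<subseteq> nbhd01 B e'"
  unfolding nbhd01_def by force

lemma nbhd01_nbhd01: "nbhd01 (nbhd01 {p} a) b \<subseteq> nbhd01 {p} (a + b)"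
  unfolding nbhd01_def dist_real_def by auto

lemma prohorov_le:
  assumes "\<epsilon> > 0" "\<And>B. B \<in> sets unit_borel \<Longrightarrow> measure \<nu>1 B \<le> measure \<nu>2 (nbhd01 B \<epsilon>) + \<epsilon>"
  shows "prohorov \<nu>1 \<nu>2 \<le> \<epsilon>"
  unfolding prohorov_def using assms by (intro cInf_lower bdd_belowI[of _ 0]) auto

lemma prohorov_lessE:
  assumes "\<nu>1 \<in> PM01" "prohorov \<nu>1 \<nu>2 < e"
  obtains \<epsilon> where "0 < \<epsilon>" "\<epsilon> < e"
    "\<And>B. B \<in> sets unit_borel \<Longrightarrow> measure \<nu>1 B \<le> measure \<nu>2 (nbhd01 B \<epsilon>) + \<epsilon>"
proof -
  interpret prob_space \<nu>1
    using PM01D(1)[OF assms(1)] .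
  have "measure \<nu>1 B \<le> measure \<nu>2 (nbhd01 B 1) + 1" for B
    using prob_le_1[of B] measure_nonneg[of \<nu>2 "nbhd01 B 1"] by linarith
  then have "1 \<in> {\<epsilon>. \<epsilon> > 0 \<and> (\<forall>B\<in>sets unit_borel. measure \<nu>1 B \<le> measure \<nu>2 (nbhd01 B \<epsilon>) + \<epsilon>)}"
    by simp
  then obtain \<epsilon> where "\<epsilon> > 0" "\<epsilon> < e"
    "\<forall>B\<in>sets unit_borel. measure \<nu>1 B \<le> measure \<nu>2 (nbhd01 B \<epsilon>) + \<epsilon>"
    using cInf_lessD[OF _ assms(2)[unfolded prohorov_def]] by blast
  then show thesis
    using that by blast
qed

lemma prohorov_geI:
  assumes "\<nu>1 \<in> PM01"
    and "\<And>\<epsilon>. 0 < \<epsilon> \<Longrightarrow> \<epsilon> < c \<Longrightarrow> \<exists>B\<in>sets unit_borel. measure \<nu>2 (nbhd01 B \<epsilon>) + \<epsilon> < measure \<nu>1 B"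
  shows "c \<le> prohorov \<nu>1 \<nu>2"
proof (rule ccontr)
  assume "\<not> c \<le> prohorov \<nu>1 \<nu>2"
  then have "prohorov \<nu>1 \<nu>2 < c"
    by simp
  then obtain \<epsilon> where "0 < \<epsilon>" "\<epsilon> < c"
    and le: "\<And>B. B \<in> sets unit_borel \<Longrightarrow> measure \<nu>1 B \<le> measure \<nu>2 (nbhd01 B \<epsilon>) + \<epsilon>"
    using prohorov_lessE[OF assms(1)] by blast
  then obtain B where "B \<in> sets unit_borel" "measure \<nu>2 (nbhd01 B \<epsilon>) + \<epsilon> < measure \<nu>1 B"
    using assms(2) by blast
  then show False
    using le[of B] by linarith
qed

definition concentrated :: "real \<Rightarrow> real \<Rightarrow> real measure set" where
  "concentrated p r = {\<nu> \<in> PM01. \<exists>\<epsilon>. 0 < \<epsilon> \<and> \<epsilon> < r \<and> 1 - \<epsilon> \<le> measure \<nu> (nbhd01 {p} \<epsilon>)}"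

lemma concentrated_open: "mopen_in PM01 prohorov (concentrated p r)"
  unfolding mopen_in_def
proof (intro conjI ballI)
  show "concentrated p r \<subseteq> PM01"
    by (auto simp: concentrated_def)
  fix \<nu> assume "\<nu> \<in> concentrated p r"
  then obtain \<epsilon> where \<nu>: "\<nu> \<in> PM01" "0 < \<epsilon>" "\<epsilon> < r" "1 - \<epsilon> \<le> measure \<nu> (nbhd01 {p} \<epsilon>)"
    unfolding concentrated_def by blast
  have "\<rho> \<in> concentrated p r" if \<rho>: "\<rho> \<in> PM01" "prohorov \<nu> \<rho> < r - \<epsilon>" for \<rho>
  proof -
    obtain \<epsilon>' where "0 < \<epsilon>'" "\<epsilon>' < r - \<epsilon>"
      and le: "\<And>B. B \<in> sets unit_borel \<Longrightarrow> measure \<nu> B \<le> measure \<rho> (nbhd01 B \<epsilon>') + \<epsilon>'"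
      using prohorov_lessE[OF \<nu>(1) \<rho>(2)] by blast
    interpret prob_space \<rho>
      using PM01D(1)[OF \<rho>(1)] .
    have "measure \<rho> (nbhd01 (nbhd01 {p} \<epsilon>) \<epsilon>') \<le> measure \<rho> (nbhd01 {p} (\<epsilon> + \<epsilon>'))"
      using nbhd01_nbhd01 nbhd01_in_sets by (intro finite_measure_mono) (simp_all add: PM01D[OF \<rho>(1)])
    then have "1 - (\<epsilon> + \<epsilon>') \<le> measure \<rho> (nbhd01 {p} (\<epsilon> + \<epsilon>'))"
      using le[OF nbhd01_in_sets[of "{p}" \<epsilon>]] \<nu>(4) by linarith
    moreover have "0 < \<epsilon> + \<epsilon>'" "\<epsilon> + \<epsilon>' < r"
      using \<open>0 < \<epsilon>\<close> \<open>0 < \<epsilon>'\<close> \<open>\<epsilon>' < r - \<epsilon>\<close> by linarith+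
    ultimately show ?thesis
      unfolding concentrated_def using \<rho>(1) by blast
  qed
  moreover have "r - \<epsilon> > 0"
    using \<nu>(3) by simp
  ultimately show "\<exists>e>0. \<forall>\<rho>\<in>PM01. prohorov \<nu> \<rho> < e \<longrightarrow> \<rho> \<in> concentrated p r"
    by blast
qed

lemma return_in_concentrated:
  assumes "p \<in> {0..1}" "r > 0"
  shows "return unit_borel p \<in> concentrated p r"
proof -
  have "return unit_borel p \<in> PM01"
    unfolding PM01_def using assms(1) by (simp add: prob_space_return)
  moreover have "p \<in> nbhd01 {p} (r / 2)"
    using assms by (simp add: nbhd01_singleton)
  then have "measure (return unit_borel p) (nbhd01 {p} (r / 2)) = 1"
    by (simp add: measure_return[OF nbhd01_in_sets])
  ultimately show ?thesis
    unfolding concentrated_def using assms(2) by (intro CollectI conjI exI[of _ "r / 2"]) auto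
qed

lemma concentrated_mass: "\<mu> \<in> concentrated p r \<Longrightarrow> 1 - r \<le> measure \<mu> (nbhd01 {p} r)"
proof -
  assume "\<mu> \<in> concentrated p r"
  then obtain \<epsilon> where \<mu>: "\<mu> \<in> PM01" "\<epsilon> < r" "1 - \<epsilon> \<le> measure \<mu> (nbhd01 {p} \<epsilon>)"
    unfolding concentrated_def by blast
  interpret prob_space \<mu>
    using PM01D(1)[OF \<mu>(1)] .
  have "measure \<mu> (nbhd01 {p} \<epsilon>) \<le> measure \<mu> (nbhd01 {p} r)"
    using nbhd01_mono[of \<epsilon> r] \<mu>(2) nbhd01_in_sets
    by (intro finite_measure_mono) (simp_all add: PM01D[OF \<mu>(1)])
  then show ?thesis
    using \<mu>(2,3) by linarith
qed

text \<open>A Borel set meeting \<open>G ` A\<close> has mass at least \<open>1 - c\<close> in its \<open>c\<close>-neighbourhood under the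
  image of \<open>\<nu>\<close>; any other Borel set has mass at most \<open>c\<close> under the image of \<open>\<mu>\<close>.\<close>

lemma prohorov_distr_le_if_nearly_concentrated:
  assumes \<mu>: "\<mu> \<in> PM01" and \<nu>: "\<nu> \<in> PM01" and G: "G \<in> unit_borel \<rightarrow>\<^sub>M unit_borel"
    and A: "A \<in> sets unit_borel" "1 - c \<le> measure \<mu> A" "1 - c \<le> measure \<nu> A"
    and close: "\<And>u v. u \<in> A \<Longrightarrow> v \<in> A \<Longrightarrow> \<bar>G u - G v\<bar> < c" and "c > 0"
  shows "prohorov (distr \<mu> unit_borel G) (distr \<nu> unit_borel G) \<le> c"
proof (rule prohorov_le[OF \<open>c > 0\<close>])
  interpret P\<mu>: prob_space \<mu>
    using PM01D(1)[OF \<mu>] .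
  interpret P\<nu>: prob_space \<nu>
    using PM01D(1)[OF \<nu>] .
  fix B assume B: "B \<in> sets unit_borel"
  have "measure \<mu> (G -` B \<inter> {0..1}) \<le> measure \<nu> (G -` nbhd01 B c \<inter> {0..1}) + c"
  proof (cases "\<exists>x\<in>A. G x \<in> B")
    case True
    then obtain x where "x \<in> A" "G x \<in> B"
      by blast
    have "A \<subseteq> G -` nbhd01 B c \<inter> {0..1}"
    proof
      fix y assume "y \<in> A"
      then have "y \<in> {0..1}"
        using A(1) sets_unit_borel_iff by blast
      then show "y \<in> G -` nbhd01 B c \<inter> {0..1}"
        using close[OF \<open>y \<in> A\<close> \<open>x \<in> A\<close>] \<open>G x \<in> B\<close> measurable_unit_borelD(2)[OF G]
        unfolding nbhd01_def dist_real_def by blast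
    qed
    moreover have "nbhd01 B c \<in> sets borel"
      using nbhd01_in_sets sets_unit_borel_iff by blast
    ultimately have "measure \<nu> A \<le> measure \<nu> (G -` nbhd01 B c \<inter> {0..1})"
      by (intro P\<nu>.finite_measure_mono vimage_in_sets_PM01[OF \<nu> G])
    then show ?thesis
      using P\<mu>.prob_le_1[of "G -` B \<inter> {0..1}"] A(3) by linarith
  next
    case False
    then have "G -` B \<inter> {0..1} \<subseteq> space \<mu> - A"
      unfolding PM01D(3)[OF \<mu>] by blast
    moreover have "A \<in> sets \<mu>"
      using A(1) by (simp add: PM01D(2)[OF \<mu>])
    ultimately have "measure \<mu> (G -` B \<inter> {0..1}) \<le> measure \<mu> (space \<mu> - A)"
      by (intro P\<mu>.finite_measure_mono sets.compl_sets)
    also have "\<dots> = 1 - measure \<mu> A"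
      using \<open>A \<in> sets \<mu>\<close> by (rule P\<mu>.prob_compl)
    finally show ?thesis
      using A(2) measure_nonneg[of \<nu> "G -` nbhd01 B c \<inter> {0..1}"] by linarith
  qed
  then show "measure (distr \<mu> unit_borel G) B \<le> measure (distr \<nu> unit_borel G) (nbhd01 B c) + c"
    using measure_distr_unit_borel[OF \<mu> G B] measure_distr_unit_borel[OF \<nu> G nbhd01_in_sets[of B c]]
    by linarith
qed

lemma prohorov_distr_near_id:
  assumes \<mu>: "\<mu> \<in> PM01" and \<phi>: "\<phi> \<in> unit_borel \<rightarrow>\<^sub>M unit_borel" and "\<epsilon> > 0"
    and near: "\<And>x. x \<in> {0..1} \<Longrightarrow> \<bar>\<phi> x - x\<bar> < \<epsilon>"
  shows "prohorov \<mu> (distr \<mu> unit_borel \<phi>) \<le> \<epsilon>"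
proof (rule prohorov_le[OF \<open>\<epsilon> > 0\<close>])
  interpret prob_space \<mu>
    using PM01D(1)[OF \<mu>] .
  fix B assume B: "B \<in> sets unit_borel"
  have "B \<subseteq> \<phi> -` nbhd01 B \<epsilon> \<inter> {0..1}"
  proof
    fix x assume "x \<in> B"
    then have "x \<in> {0..1}"
      using B sets_unit_borel_iff by blast
    then have "\<phi> x \<in> {0..1}" "dist (\<phi> x) x < \<epsilon>"
      using near measurable_unit_borelD(2)[OF \<phi>] by (auto simp: dist_real_def)
    then show "x \<in> \<phi> -` nbhd01 B \<epsilon> \<inter> {0..1}"
      unfolding nbhd01_def using \<open>x \<in> B\<close> \<open>x \<in> {0..1}\<close> by blast
  qed
  moreover have "nbhd01 B \<epsilon> \<in> sets borel"
    using nbhd01_in_sets sets_unit_borel_iff by blast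
  ultimately have "measure \<mu> B \<le> measure \<mu> (\<phi> -` nbhd01 B \<epsilon> \<inter> {0..1})"
    by (intro finite_measure_mono vimage_in_sets_PM01[OF \<mu> \<phi>])
  then show "measure \<mu> B \<le> measure (distr \<mu> unit_borel \<phi>) (nbhd01 B \<epsilon>) + \<epsilon>"
    using measure_distr_unit_borel[OF \<mu> \<phi> nbhd01_in_sets[of B \<epsilon>]] \<open>\<epsilon> > 0\<close> by linarith
qed

lemma unit_interval_step_cover:
  fixes L y :: real
  assumes "L > 0" "y \<in> {0..1}"
  obtains q :: nat where "q < nat \<lfloor>1 / L\<rfloor> + 1" "y \<in> {q * L..q * L + L}"
proof -
  define q where "q = nat \<lfloor>y / L\<rfloor>"
  have "0 \<le> y / L" "y / L \<le> 1 / L"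
    using assms by (auto simp: divide_right_mono)
  then have "real q \<le> y / L" "y / L < real q + 1" "q < nat \<lfloor>1 / L\<rfloor> + 1"
    unfolding q_def by (linarith, linarith, simp add: floor_mono nat_mono le_imp_less_Suc)
  moreover have "y \<in> {q * L..q * L + L}"
    using calculation(1,2) assms(1) by (simp add: field_simps)
  ultimately show thesis
    using that by blast
qed

lemma (in prob_space) interval_pigeonhole:
  fixes X :: "'a \<Rightarrow> real" and L :: real
  assumes X: "X \<in> borel_measurable M" "\<And>x. x \<in> space M \<Longrightarrow> X x \<in> {0..1}" and "L > 0"
  obtains q :: nat where "L / (1 + L) \<le> prob {x \<in> space M. X x \<in> {real q * L..real q * L + L}}"
proof -
  define Q where "Q = nat \<lfloor>1 / L\<rfloor> + 1"
  define I where "I q = {x \<in> space M. X x \<in> {real q * L..real q * L + L}}" for q :: nat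
  have I_events: "I q \<in> events" for q
    unfolding I_def using X(1) by measurable
  have "space M \<subseteq> (\<Union>q<Q. I q)"
  proof
    fix x assume x: "x \<in> space M"
    then obtain q where "q < Q" "X x \<in> {real q * L..real q * L + L}"
      using unit_interval_step_cover[OF \<open>L > 0\<close> X(2)] unfolding Q_def by blast
    then show "x \<in> (\<Union>q<Q. I q)"
      unfolding I_def using x by blast
  qed
  moreover have "(\<Union>q<Q. I q) \<in> events"
    using I_events by (simp add: sets.finite_UN)
  ultimately have "1 \<le> prob (\<Union>q<Q. I q)"
    using finite_measure_mono prob_space by metis
  also have "\<dots> \<le> (\<Sum>q<Q. prob (I q))"
    using I_events by (intro finite_measure_subadditive_finite) auto
  finally have "1 \<le> (\<Sum>q<Q. prob (I q))" .
  moreover have "real Q * (L / (1 + L)) \<le> 1"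
  proof -
    have "real (nat \<lfloor>1 / L\<rfloor>) = \<lfloor>1 / L\<rfloor>"
      using \<open>L > 0\<close> by simp
    then have "real Q \<le> 1 / L + 1"
      unfolding Q_def using of_int_floor_le[of "1 / L"] by simp
    also have "\<dots> = (1 + L) / L"
      using \<open>L > 0\<close> by (simp add: field_simps)
    finally have "real Q \<le> (1 + L) / L" .
    then have "real Q * (L / (1 + L)) \<le> ((1 + L) / L) * (L / (1 + L))"
      using \<open>L > 0\<close> by (intro mult_right_mono) simp_all
    also have "\<dots> = 1"
      using \<open>L > 0\<close> by simp
    finally show ?thesis .
  qed
  ultimately have "\<exists>q<Q. L / (1 + L) \<le> prob (I q)"
    using sum_bounded_above_strict[of "{..<Q}" "\<lambda>q. prob (I q)" "L / (1 + L)"]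
    by (force simp: Q_def not_le)
  then show thesis
    using that unfolding I_def by blast
qed

lemma measure_distr_separated_gap:
  assumes \<mu>: "\<mu> \<in> PM01" and \<Phi>: "\<Phi> \<in> unit_borel \<rightarrow>\<^sub>M unit_borel" and \<Psi>: "\<Psi> \<in> unit_borel \<rightarrow>\<^sub>M unit_borel"
    and sep: "\<And>x. x \<in> {0..1} \<Longrightarrow> \<Phi> x + \<eta> \<le> \<Psi> x" and "0 \<le> t" "\<epsilon> \<le> \<eta>"
  shows "measure \<mu> (\<Phi> -` {t - \<eta>..t - \<epsilon>} \<inter> {0..1}) + measure (distr \<mu> unit_borel \<Phi>) (nbhd01 {t..1} \<epsilon>)
    \<le> measure (distr \<mu> unit_borel \<Psi>) {t..1}"
proof -
  interpret prob_space \<mu>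
    using PM01D(1)[OF \<mu>] .
  define S1 S2 where "S1 = \<Phi> -` {t - \<eta>..t - \<epsilon>} \<inter> {0..1}" and "S2 = \<Phi> -` {t - \<epsilon><..} \<inter> {0..1}"
  have B: "{t..1} \<in> sets unit_borel"
    using \<open>0 \<le> t\<close> by (auto simp: sets_unit_borel_iff)
  have S_events: "S1 \<in> sets \<mu>" "S2 \<in> sets \<mu>"
    unfolding S1_def S2_def by (simp_all add: vimage_in_sets_PM01[OF \<mu> \<Phi>])
  have sub: "S1 \<union> S2 \<subseteq> \<Psi> -` {t..1} \<inter> {0..1}"
  proof
    fix x assume "x \<in> S1 \<union> S2"
    then have "x \<in> {0..1}" "t - \<eta> \<le> \<Phi> x"
      unfolding S1_def S2_def using \<open>\<epsilon> \<le> \<eta>\<close> by auto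
    then show "x \<in> \<Psi> -` {t..1} \<inter> {0..1}"
      using sep[of x] measurable_unit_borelD(2)[OF \<Psi>, of x] by auto
  qed
  have "S1 \<inter> S2 = {}"
    unfolding S1_def S2_def by auto
  then have "measure \<mu> S1 + measure \<mu> S2 = measure \<mu> (S1 \<union> S2)"
    using S_events by (simp add: finite_measure_Union)
  also have "\<dots> \<le> measure \<mu> (\<Psi> -` {t..1} \<inter> {0..1})"
    using sub B sets_unit_borel_iff by (intro finite_measure_mono vimage_in_sets_PM01[OF \<mu> \<Psi>]) auto
  finally have "measure \<mu> S1 + measure \<mu> S2 \<le> measure \<mu> (\<Psi> -` {t..1} \<inter> {0..1})" .
  moreover have "\<Phi> -` nbhd01 {t..1} \<epsilon> \<inter> {0..1} \<subseteq> S2"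
    unfolding S2_def nbhd01_def dist_real_def by auto
  then have "measure \<mu> (\<Phi> -` nbhd01 {t..1} \<epsilon> \<inter> {0..1}) \<le> measure \<mu> S2"
    using S_events by (intro finite_measure_mono)
  ultimately show ?thesis
    using measure_distr_unit_borel[OF \<mu> \<Psi> B] measure_distr_unit_borel[OF \<mu> \<Phi> nbhd01_in_sets[of "{t..1}" \<epsilon>]]
    unfolding S1_def by linarith
qed

text \<open>By pigeonhole some interval \<open>I\<close> of length \<open>\<eta> / 2\<close> carries \<open>\<Phi>\<close>-mass at least \<open>\<eta> / 4\<close>;
  all of this mass is pushed by \<open>\<Psi>\<close> into the set \<open>{min I + \<eta>..1}\<close>, whose small neighbourhoods
  it misses under \<open>\<Phi>\<close>.\<close>

lemma prohorov_distr_separated: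
  assumes \<mu>: "\<mu> \<in> PM01" and \<Phi>: "\<Phi> \<in> unit_borel \<rightarrow>\<^sub>M unit_borel" and \<Psi>: "\<Psi> \<in> unit_borel \<rightarrow>\<^sub>M unit_borel"
    and "\<eta> > 0" and sep: "\<And>x. x \<in> {0..1} \<Longrightarrow> \<Phi> x + \<eta> \<le> \<Psi> x"
  shows "\<eta> / 4 \<le> prohorov (distr \<mu> unit_borel \<Psi>) (distr \<mu> unit_borel \<Phi>)"
proof -
  interpret prob_space \<mu>
    using PM01D(1)[OF \<mu>] .
  have \<Phi>01: "\<Phi> x \<in> {0..1}" if "x \<in> {0..1}" for x
    using that measurable_unit_borelD(2)[OF \<Phi>] by blast
  have "\<eta> \<le> 1"
    using sep[of 0] \<Phi>01[of 0] measurable_unit_borelD(2)[OF \<Psi>, of 0] by simp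
  define L where "L = \<eta> / 2"
  have "\<Phi> \<in> borel_measurable \<mu>"
    using measurable_unit_borelD(1)[OF \<Phi>] by (simp add: measurable_PM01[OF \<mu>])
  then obtain q :: nat where q: "L / (1 + L) \<le> measure \<mu> {x \<in> {0..1}. \<Phi> x \<in> {q * L..q * L + L}}"
    using interval_pigeonhole[of \<Phi> L] \<Phi>01 \<open>\<eta> > 0\<close> by (auto simp: PM01D(3)[OF \<mu>] L_def)
  have "\<eta> / 4 \<le> L / (1 + L)"
    using \<open>\<eta> > 0\<close> \<open>\<eta> \<le> 1\<close> by (simp add: L_def field_simps)
  also note q
  also have "{x \<in> {0..1}. \<Phi> x \<in> {q * L..q * L + L}} = \<Phi> -` {q * L..q * L + L} \<inter> {0..1}"
    by blast
  finally have q: "\<eta> / 4 \<le> measure \<mu> (\<Phi> -` {q * L..q * L + L} \<inter> {0..1})" .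
  define t where "t = q * L + \<eta>"
  have "0 \<le> t"
    using \<open>\<eta> > 0\<close> by (simp add: t_def L_def)
  show ?thesis
  proof (rule prohorov_geI[OF distr_in_PM01[OF \<mu> \<Psi>]])
    fix \<epsilon> :: real assume "0 < \<epsilon>" "\<epsilon> < \<eta> / 4"
    then have "\<Phi> -` {q * L..q * L + L} \<inter> {0..1} \<subseteq> \<Phi> -` {t - \<eta>..t - \<epsilon>} \<inter> {0..1}"
      by (auto simp: t_def L_def)
    then have "measure \<mu> (\<Phi> -` {q * L..q * L + L} \<inter> {0..1})
        \<le> measure \<mu> (\<Phi> -` {t - \<eta>..t - \<epsilon>} \<inter> {0..1})"
      by (intro finite_measure_mono vimage_in_sets_PM01[OF \<mu> \<Phi>]) simp_all
    then have "\<eta> / 4 \<le> measure \<mu> (\<Phi> -` {t - \<eta>..t - \<epsilon>} \<inter> {0..1})"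
      using q by linarith
    moreover have "measure \<mu> (\<Phi> -` {t - \<eta>..t - \<epsilon>} \<inter> {0..1})
        + measure (distr \<mu> unit_borel \<Phi>) (nbhd01 {t..1} \<epsilon>) \<le> measure (distr \<mu> unit_borel \<Psi>) {t..1}"
      by (rule measure_distr_separated_gap[OF \<mu> \<Phi> \<Psi>]) (use sep \<open>0 \<le> t\<close> \<open>0 < \<epsilon>\<close> \<open>\<epsilon> < \<eta> / 4\<close> in auto)
    ultimately have "measure (distr \<mu> unit_borel \<Phi>) (nbhd01 {t..1} \<epsilon>) + \<epsilon> < measure (distr \<mu> unit_borel \<Psi>) {t..1}"
      using \<open>\<epsilon> < \<eta> / 4\<close> by linarith
    moreover have "{t..1} \<in> sets unit_borel"
      using \<open>0 \<le> t\<close> by (auto simp: sets_unit_borel_iff)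
    ultimately show "\<exists>B\<in>sets unit_borel. measure (distr \<mu> unit_borel \<Phi>) (nbhd01 B \<epsilon>) + \<epsilon>
        < measure (distr \<mu> unit_borel \<Psi>) B"
      by blast
  qed
qed

text \<open>The point \<open>1\<close> is put into the last cell.\<close>

definition grid_index :: "nat \<Rightarrow> real \<Rightarrow> nat" where
  "grid_index m x = min (nat \<lfloor>x * m\<rfloor>) (m - 1)"

lemma grid_index_correct:
  assumes "m \<ge> 1" "x \<in> {0..1}"
  shows "grid_index m x < m" "x \<in> grid_interval m (grid_index m x)"
proof -
  have m: "real m > 0"
    using assms(1) by simp
  show "grid_index m x < m"
    using assms(1) by (simp add: grid_index_def)
  show "x \<in> grid_interval m (grid_index m x)"
  proof (cases "nat \<lfloor>x * m\<rfloor> \<le> m - 1")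
    case True
    then have "real (grid_index m x) = \<lfloor>x * m\<rfloor>"
      using assms(2) by (simp add: grid_index_def)
    then show ?thesis
      unfolding grid_interval_def using m by (simp add: field_simps) linarith
  next
    case False
    then have "int m \<le> \<lfloor>x * m\<rfloor>"
      using assms(1) by linarith
    then have "real m * 1 \<le> real m * x"
      by (simp add: le_floor_iff mult.commute)
    then have "x = 1" "grid_index m x = m - 1"
      using assms(2) m False by (simp_all add: grid_index_def)
    then show ?thesis
      unfolding grid_interval_def using assms(1) m by (simp add: field_simps of_nat_diff)
  qed
qed

lemma grid_step_function:
  fixes s :: "nat \<Rightarrow> real"
  assumes "m \<ge> 1" "\<And>c. c < m \<Longrightarrow> s c \<in> grid_interval m c"
  shows "(\<lambda>x. s (grid_index m x)) \<in> unit_borel \<rightarrow>\<^sub>M unit_borel"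
    and "\<And>x. x \<in> {0..1} \<Longrightarrow> \<bar>s (grid_index m x) - x\<bar> < 2 / m"
proof -
  have "(\<lambda>x. s (min (nat \<lfloor>x * real m\<rfloor>) (m - 1))) \<in> borel_measurable borel"
    by measurable
  then have "(\<lambda>x. s (grid_index m x)) \<in> unit_borel \<rightarrow>\<^sub>M borel"
    unfolding unit_borel_def grid_index_def by (rule measurable_restrict_space1)
  moreover have "s (grid_index m x) \<in> {0..1}" if "x \<in> {0..1}" for x
    using assms grid_index_correct[OF assms(1) that] grid_interval_subset_unit by blast
  ultimately show "(\<lambda>x. s (grid_index m x)) \<in> unit_borel \<rightarrow>\<^sub>M unit_borel"
    unfolding unit_borel_def by (intro measurable_restrict_space2) (auto simp: unit_borel_def)
  fix x :: real assume "x \<in> {0..1}"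
  then have "s (grid_index m x) \<in> grid_interval m (grid_index m x)" "x \<in> grid_interval m (grid_index m x)"
    using assms grid_index_correct by blast+
  moreover have "1 / real m < 2 / real m"
    using assms(1) by (simp add: divide_strict_right_mono)
  ultimately show "\<bar>s (grid_index m x) - x\<bar> < 2 / m"
    unfolding grid_interval_def by (auto simp: add_divide_distrib abs_le_iff)
qed

section \<open>The induced system\<close>

context periodic_interval_system
begin

lemma iter_measurable: "iter f 1 n \<in> unit_borel \<rightarrow>\<^sub>M unit_borel"
  using iter_continuous_maps_unit by (simp add: measurable_unit_borelI)

lemma iter_induced:
  assumes "\<mu> \<in> PM01"
  shows "iter (induced f) 1 n \<mu> = distr \<mu> unit_borel (iter f 1 n)"
proof (induction n)
  case 0
  show ?case
    using distr_id2[of unit_borel \<mu>] by (simp add: PM01D[OF assms] id_def)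
next
  case (Suc n)
  have "f (1 + n) \<in> unit_borel \<rightarrow>\<^sub>M unit_borel"
    using continuous maps_unit by (simp add: measurable_unit_borelI)
  moreover have "iter f 1 n \<in> \<mu> \<rightarrow>\<^sub>M unit_borel"
    using iter_measurable by (simp add: measurable_PM01[OF assms])
  ultimately show ?case
    using Suc.IH by (simp add: induced_def distr_distr comp_def)
qed

lemma iter_induced_distr:
  assumes "\<mu> \<in> PM01" "\<phi> \<in> unit_borel \<rightarrow>\<^sub>M unit_borel"
  shows "iter (induced f) 1 n (distr \<mu> unit_borel \<phi>) = distr \<mu> unit_borel (iter f 1 n \<circ> \<phi>)"
proof -
  have "iter (induced f) 1 n (distr \<mu> unit_borel \<phi>) = distr (distr \<mu> unit_borel \<phi>) unit_borel (iter f 1 n)"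
    by (rule iter_induced[OF distr_in_PM01[OF assms]])
  also have "\<dots> = distr \<mu> unit_borel (iter f 1 n \<circ> \<phi>)"
    using assms(2) by (intro distr_distr[OF iter_measurable]) (simp add: measurable_PM01[OF assms(1)])
  finally show ?thesis .
qed

lemma concentrated_far_imp_Nset:
  assumes \<mu>: "\<mu> \<in> concentrated p r" and \<nu>: "\<nu> \<in> concentrated p r" and "nbhd01 {p} r \<subseteq> U"
    and "\<delta> > 0" "r \<le> \<delta> / 2" "n \<ge> 1"
    and far: "\<delta> < prohorov (iter (induced f) 1 n \<mu>) (iter (induced f) 1 n \<nu>)"
  shows "n \<in> Nset dist f U (\<delta> / 2)"
proof (rule ccontr)
  assume "n \<notin> Nset dist f U (\<delta> / 2)"
  then have "\<not> \<delta> / 2 < \<bar>iter f 1 n u - iter f 1 n v\<bar>"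
    if "u \<in> nbhd01 {p} r" "v \<in> nbhd01 {p} r" for u v
    using that \<open>n \<ge> 1\<close> assms(3) unfolding Nset_def dist_real_def by blast
  then have close: "\<bar>iter f 1 n u - iter f 1 n v\<bar> < 3 * \<delta> / 4"
    if "u \<in> nbhd01 {p} r" "v \<in> nbhd01 {p} r" for u v
    using that \<open>\<delta> > 0\<close> by fastforce
  have PM: "\<mu> \<in> PM01" "\<nu> \<in> PM01"
    using \<mu> \<nu> by (simp_all add: concentrated_def)
  have mass: "1 - 3 * \<delta> / 4 \<le> measure \<mu> (nbhd01 {p} r)" "1 - 3 * \<delta> / 4 \<le> measure \<nu> (nbhd01 {p} r)"
    using concentrated_mass[OF \<mu>] concentrated_mass[OF \<nu>] \<open>\<delta> > 0\<close> \<open>r \<le> \<delta> / 2\<close> by linarith+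
  have "prohorov (distr \<mu> unit_borel (iter f 1 n)) (distr \<nu> unit_borel (iter f 1 n)) \<le> 3 * \<delta> / 4"
    using \<open>\<delta> > 0\<close>
    by (intro prohorov_distr_le_if_nearly_concentrated[OF PM iter_measurable nbhd01_in_sets mass close])
      simp_all
  then show False
    using far \<open>\<delta> > 0\<close> iter_induced[OF PM(1), of n] iter_induced[OF PM(2), of n] by simp
qed

lemma sensitive_induced_imp_sensitive:
  assumes "sensitive PM01 prohorov (induced f)"
  shows "sensitive {0..1} dist f"
proof -
  obtain \<delta> where "\<delta> > 0" and \<delta>: "\<And>W. mopen_in PM01 prohorov W \<Longrightarrow> W \<noteq> {} \<Longrightarrow>
      Nset prohorov (induced f) W \<delta> \<noteq> {}"
    using assms unfolding sensitive_def by blast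
  have "Nset dist f U (\<delta> / 2) \<noteq> {}" if U: "mopen_in {0..1} dist U" "U \<noteq> {}" for U
  proof -
    obtain p where "p \<in> U"
      using U(2) by blast
    then obtain e where "e > 0" "nbhd01 {p} e \<subseteq> U"
      using U(1) unit_interval_open_contains_nbhd by blast
    define r where "r = min e (\<delta> / 2)"
    have "nbhd01 {p} r \<subseteq> U"
      using nbhd01_mono[of r e "{p}"] \<open>nbhd01 {p} e \<subseteq> U\<close> by (simp add: r_def)
    have "r > 0"
      using \<open>e > 0\<close> \<open>\<delta> > 0\<close> by (simp add: r_def)
    moreover have "p \<in> {0..1}"
      using \<open>p \<in> U\<close> U(1) unfolding mopen_in_def by blast
    ultimately have "concentrated p r \<noteq> {}"
      using return_in_concentrated by blast
    then obtain n \<mu> \<nu> where "n \<ge> 1" "\<mu> \<in> concentrated p r" "\<nu> \<in> concentrated p r"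
      "\<delta> < prohorov (iter (induced f) 1 n \<mu>) (iter (induced f) 1 n \<nu>)"
      using \<delta>[OF concentrated_open] unfolding Nset_def by blast
    then have "n \<in> Nset dist f U (\<delta> / 2)"
      using concentrated_far_imp_Nset \<open>nbhd01 {p} r \<subseteq> U\<close> \<open>\<delta> > 0\<close> by (simp add: r_def)
    then show ?thesis
      by blast
  qed
  then show ?thesis
    unfolding sensitive_def using \<open>\<delta> > 0\<close> by (intro exI[of _ "\<delta> / 2"]) auto
qed

text \<open>Move each point of a grid cell to a chosen point of that cell with low, respectively high,
  \<open>f\<^sub>1\<^sup>n\<close>-value: the two step functions are close to the identity, but their compositions with \<open>f\<^sub>1\<^sup>n\<close>
  are separated by \<open>\<eta>\<close>.\<close>

lemma grid_spread_gives_far_measures: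
  assumes \<mu>: "\<mu> \<in> PM01" and "m \<ge> 1" "\<eta> > 0"
    and spread: "\<And>c. c < m \<Longrightarrow> \<exists>u\<in>grid_interval m c. \<exists>v\<in>grid_interval m c.
      \<eta> < \<bar>iter f 1 n u - iter f 1 n v\<bar>"
  obtains \<nu> \<nu>' where "\<nu> \<in> PM01" "\<nu>' \<in> PM01" "prohorov \<mu> \<nu> \<le> 2 / m" "prohorov \<mu> \<nu>' \<le> 2 / m"
    "\<eta> / 4 \<le> prohorov (iter (induced f) 1 n \<nu>') (iter (induced f) 1 n \<nu>)"
proof -
  let ?G = "iter f 1 n"
  have "\<exists>l\<in>grid_interval m c. \<exists>r\<in>grid_interval m c. ?G l + \<eta> \<le> ?G r" if c: "c < m" for c
  proof -
    obtain u v where uv: "u \<in> grid_interval m c" "v \<in> grid_interval m c" "\<eta> < \<bar>?G u - ?G v\<bar>"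
      using spread[OF c] by blast
    then have "?G u + \<eta> \<le> ?G v \<or> ?G v + \<eta> \<le> ?G u"
      by linarith
    then show ?thesis
      using uv(1,2) by blast
  qed
  then obtain l r where lr: "\<And>c. c < m \<Longrightarrow> l c \<in> grid_interval m c \<and> r c \<in> grid_interval m c
      \<and> ?G (l c) + \<eta> \<le> ?G (r c)"
    by metis
  define \<phi> \<psi> where "\<phi> x = l (grid_index m x)" and "\<psi> x = r (grid_index m x)" for x
  have \<phi>: "\<phi> \<in> unit_borel \<rightarrow>\<^sub>M unit_borel" "\<And>x. x \<in> {0..1} \<Longrightarrow> \<bar>\<phi> x - x\<bar> < 2 / m"
    unfolding \<phi>_def using grid_step_function[of m l] lr \<open>m \<ge> 1\<close> by blast+
  have \<psi>: "\<psi> \<in> unit_borel \<rightarrow>\<^sub>M unit_borel" "\<And>x. x \<in> {0..1} \<Longrightarrow> \<bar>\<psi> x - x\<bar> < 2 / m"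
    unfolding \<psi>_def using grid_step_function[of m r] lr \<open>m \<ge> 1\<close> by blast+
  have "(?G \<circ> \<phi>) x + \<eta> \<le> (?G \<circ> \<psi>) x" if "x \<in> {0..1}" for x
    unfolding \<phi>_def \<psi>_def using lr grid_index_correct[OF \<open>m \<ge> 1\<close> that] by simp
  then have "\<eta> / 4 \<le> prohorov (distr \<mu> unit_borel (?G \<circ> \<psi>)) (distr \<mu> unit_borel (?G \<circ> \<phi>))"
    using \<phi>(1) \<psi>(1) iter_measurable \<open>\<eta> > 0\<close> by (intro prohorov_distr_separated[OF \<mu>]) auto
  then have "\<eta> / 4 \<le> prohorov (iter (induced f) 1 n (distr \<mu> unit_borel \<psi>))
      (iter (induced f) 1 n (distr \<mu> unit_borel \<phi>))"
    by (simp only: iter_induced_distr[OF \<mu> \<phi>(1)] iter_induced_distr[OF \<mu> \<psi>(1)])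
  moreover have "2 / real m > 0"
    using \<open>m \<ge> 1\<close> by simp
  then have "prohorov \<mu> (distr \<mu> unit_borel \<phi>) \<le> 2 / m" "prohorov \<mu> (distr \<mu> unit_borel \<psi>) \<le> 2 / m"
    using prohorov_distr_near_id[OF \<mu> \<phi>(1)] prohorov_distr_near_id[OF \<mu> \<psi>(1)] \<phi>(2) \<psi>(2) by blast+
  ultimately show thesis
    using that[OF distr_in_PM01[OF \<mu> \<phi>(1)] distr_in_PM01[OF \<mu> \<psi>(1)]] by blast
qed

lemma cofinitely_sensitive_induced:
  assumes "cofinitely_sensitive {0..1} dist f"
  shows "cofinitely_sensitive PM01 prohorov (induced f)"
proof -
  obtain \<eta> where "\<eta> > 0" and \<eta>: "\<And>U. mopen_in {0..1} dist U \<Longrightarrow> U \<noteq> {} \<Longrightarrow>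
      \<forall>\<^sub>F n in sequentially. n \<in> Nset dist f U \<eta>"
    using assms unfolding cofinitely_sensitive_def by blast
  have "\<forall>\<^sub>F n in sequentially. n \<in> Nset prohorov (induced f) W (\<eta> / 8)"
    if W: "mopen_in PM01 prohorov W" "W \<noteq> {}" for W
  proof -
    obtain \<mu> where "\<mu> \<in> W"
      using W(2) by blast
    then obtain e where "e > 0" and e: "\<And>\<nu>. \<nu> \<in> PM01 \<Longrightarrow> prohorov \<mu> \<nu> < e \<Longrightarrow> \<nu> \<in> W"
      and \<mu>: "\<mu> \<in> PM01"
      using W(1) unfolding mopen_in_def by blast
    obtain m :: nat where m: "m \<ge> 1" "2 / m < e"
      using fine_grid_exists[OF \<open>e > 0\<close>] by blast
    let ?J = "\<lambda>c. {real c / m<..<(real c + 1) / m}"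
    have "\<forall>\<^sub>F n in sequentially. \<forall>c\<in>{..<m}. n \<in> Nset dist f (?J c) \<eta>"
      using \<eta> open_grid_interval[OF m(1)] by (intro eventually_ball_finite) auto
    then show ?thesis
    proof (rule eventually_mono)
      fix n assume n: "\<forall>c\<in>{..<m}. n \<in> Nset dist f (?J c) \<eta>"
      then have "n \<ge> 1"
        using bspec[OF n, of 0] m(1) unfolding Nset_def by auto
      have "\<exists>u\<in>grid_interval m c. \<exists>v\<in>grid_interval m c. \<eta> < \<bar>iter f 1 n u - iter f 1 n v\<bar>"
        if "c < m" for c
        using n that open_grid_interval(3)[OF m(1) that] unfolding Nset_def dist_real_def by blast
      then obtain \<nu> \<nu>' where "\<nu> \<in> PM01" "\<nu>' \<in> PM01" "prohorov \<mu> \<nu> \<le> 2 / m" "prohorov \<mu> \<nu>' \<le> 2 / m"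
        and far: "\<eta> / 4 \<le> prohorov (iter (induced f) 1 n \<nu>') (iter (induced f) 1 n \<nu>)"
        using grid_spread_gives_far_measures[OF \<mu> m(1) \<open>\<eta> > 0\<close>] by blast
      then have "\<nu> \<in> W" "\<nu>' \<in> W"
        using e m(2) by simp_all
      moreover have "\<eta> / 8 < \<eta> / 4"
        using \<open>\<eta> > 0\<close> by simp
      ultimately show "n \<in> Nset prohorov (induced f) W (\<eta> / 8)"
        unfolding Nset_def using \<open>n \<ge> 1\<close> far by force
    qed
  qed
  then show ?thesis
    unfolding cofinitely_sensitive_def using \<open>\<eta> > 0\<close> by (intro exI[of _ "\<eta> / 8"]) auto
qed

end

theorem mainTheorem6:
  fixes f :: "nat \<Rightarrow> real \<Rightarrow> real"
  assumes cont: "\<And>n. n \<ge> 1 \<Longrightarrow> continuous_on {0..1} (f n)"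
    and maps: "\<And>n. n \<ge> 1 \<Longrightarrow> f n ` {0..1} \<subseteq> {0..1}"
    and periodic: "\<exists>k\<ge>1. \<forall>l\<ge>1. \<forall>j\<in>{1..k}. f (j + k * l) = f j"
  shows "(strongly_multi_sensitive {0..1} dist f \<longleftrightarrow>
            strongly_multi_sensitive PM01 prohorov (induced f))
       \<and> (N_sensitive {0..1} dist f \<longleftrightarrow> N_sensitive PM01 prohorov (induced f))"
proof -
  obtain k where "k \<ge> 1" "\<forall>l\<ge>1. \<forall>j\<in>{1..k}. f (j + k * l) = f j"
    using periodic by blast
  then interpret periodic_interval_system f k
    using cont maps by unfold_locales
  have base: "sensitive {0..1} dist f \<Longrightarrow> cofinitely_sensitive {0..1} dist f"
    by (rule sensitive_imp_cofinitely_sensitive)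
  have induced: "sensitive PM01 prohorov (induced f) \<longleftrightarrow> sensitive {0..1} dist f"
    using sensitive_induced_imp_sensitive base cofinitely_sensitive_induced
      cofinitely_sensitive_imp_sensitive by blast
  then have lifted: "sensitive PM01 prohorov (induced f) \<Longrightarrow> cofinitely_sensitive PM01 prohorov (induced f)"
    using base cofinitely_sensitive_induced by blast
  show ?thesis
    using sensitivity_notions_coincide[OF base] sensitivity_notions_coincide[OF lifted] induced by simp
qed

end
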